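(* Let $n$ be a fixed natural number, $G=(V,E)$ a graph on vertex set $\{1,\dots,n\}$ with graph state $|G\rangle$ and stabilizer operators $g_1,\dots,g_n$, let $T>0$, $\beta=1/(k_BT)$, and let $\rho_T$ be the $n$-qubit thermal graph state at temperature $T$. Let $\ell\in\{0,1\}^n$ be arbitrary, and suppose the observable $S_\ell$ is measured on each of $N$ independent copies of $\rho_T$, producing outcomes $o_1,\dots,o_N\in\{+1,-1\}$, with $F_{\rm est}=\frac1N\sum_{i=1}^N o_i$. Then, in the limit $N\to\infty$, with probability one, $$\left|\langle G|\rho_T|G\rangle-F_{\rm est}\right| = \frac{\left|(n-2\,{\rm wt}(\ell))e^{-2\beta}+O(e^{-4\beta})\right|}{(1+e^{-2\beta})^n},$$ where ${\rm wt}(\ell)=\sum_{i=1}^n\ell_i$ is the Hamming weight and $O(e^{-4\beta})$ denotes terms of order $e^{-4\beta}$ and higher in $e^{-2\beta}$.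
   Context: For a graph $G=(V,E)$ on $n$ vertices, the graph state is $|G\rangle=\left(\prod_{(i,j)\in E}CZ_{i,j}\right)|+\rangle^{\otimes n}$, where $|+\rangle=(|0\rangle+|1\rangle)/\sqrt2$ and $CZ_{i,j}$ is the controlled-$Z$ gate on qubits $i,j$. Its stabilizer operators are $g_i=X_i\prod_{j:(i,j)\in E}Z_j$ for $1\le i\le n$, where $X_i,Z_j$ are Pauli operators on the indicated qubits. For $\ell=\ell_1\cdots\ell_n\in\{0,1\}^n$ let $S_\ell=\prod_{i=1}^n g_i^{\ell_i}$. Measuring $S_\ell$ on a state $\rho$ means performing the two-outcome projective measurement onto its $\pm1$ eigenspaces. With $\mathcal H=-\sum_{i=1}^n g_i$, the thermal graph state at temperature $T>0$ is $\rho_T=e^{-\beta\mathcal H}/{\rm Tr}[e^{-\beta\mathcal H}]$ with $\beta=1/(k_BT)$, $k_B$ the Boltzmann constant. *)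

theory Defs
  imports "HOL-Probability.Probability" "HOL-Computational_Algebra.Polynomial"
    "Jordan_Normal_Form.Matrix"
begin

text \<open>n-qubit operators are complex 2^n x 2^n matrices (Jordan_Normal_Form).
  Qubits are indexed 0..n-1; computational basis state k < 2^n has qubit i in
  state |bit k i>.\<close>

definition trace_mat :: "complex mat \<Rightarrow> complex" where
  "trace_mat A = (\<Sum>i<dim_row A. A $$ (i,i))"

definition mat_exp :: "complex mat \<Rightarrow> complex mat" where
  "mat_exp A = Matrix.mat (dim_row A) (dim_col A)
     (\<lambda>(i,j). \<Sum>k. (A ^\<^sub>m k) $$ (i,j) / of_nat (fact k))"

definition mat_prod_list :: "nat \<Rightarrow> complex mat list \<Rightarrow> complex mat" where
  "mat_prod_list n As = foldr (*) As (1\<^sub>m (2^n))"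

definition mat_sum_list :: "nat \<Rightarrow> complex mat list \<Rightarrow> complex mat" where
  "mat_sum_list n As = foldr (+) As (0\<^sub>m (2^n) (2^n))"

definition pauli_X :: "complex mat" where
  "pauli_X = Matrix.mat 2 2 (\<lambda>(r,c). if r \<noteq> c then 1 else 0)"

definition pauli_Z :: "complex mat" where
  "pauli_Z = Matrix.mat 2 2 (\<lambda>(r,c). if r = c then (if r = 0 then 1 else -1) else 0)"

text \<open>Single-qubit operator U acting on qubit i of n qubits (identity elsewhere).\<close>
definition on_qubit :: "nat \<Rightarrow> nat \<Rightarrow> complex mat \<Rightarrow> complex mat" where
  "on_qubit n i U = Matrix.mat (2^n) (2^n)
     (\<lambda>(r,c). if (\<forall>j<n. j \<noteq> i \<longrightarrow> bit r j = bit c j)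
              then U $$ (of_bool (bit r i), of_bool (bit c i)) else 0)"

definition CZ :: "nat \<Rightarrow> nat \<Rightarrow> nat \<Rightarrow> complex mat" where
  "CZ n i j = Matrix.mat (2^n) (2^n)
     (\<lambda>(r,c). if r = c then (if bit r i \<and> bit r j then -1 else 1) else 0)"

definition plus_state :: "nat \<Rightarrow> complex vec" where
  "plus_state n = Matrix.vec (2^n) (\<lambda>_. complex_of_real (1 / sqrt (2^n)))"

text \<open>A simple graph on vertices 0..n-1; each edge {i,j} is stored once as (i,j), i<j.\<close>
definition simple_graph :: "nat \<Rightarrow> (nat \<times> nat) set \<Rightarrow> bool" where
  "simple_graph n E \<longleftrightarrow> E \<subseteq> {(i,j). i < j \<and> j < n}"

text \<open>The edges of E listed in lexicographic order (order is immaterial: the CZ gates commute).\<close>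
definition edge_list :: "nat \<Rightarrow> (nat \<times> nat) set \<Rightarrow> (nat \<times> nat) list" where
  "edge_list n E = filter (\<lambda>e. e \<in> E) (concat (map (\<lambda>i. map (\<lambda>j. (i,j)) [0..<n]) [0..<n]))"

definition graph_state :: "nat \<Rightarrow> (nat \<times> nat) set \<Rightarrow> complex vec" where
  "graph_state n E =
     mat_prod_list n (map (\<lambda>(i,j). CZ n i j) (edge_list n E)) *\<^sub>v plus_state n"

definition stabilizer :: "nat \<Rightarrow> (nat \<times> nat) set \<Rightarrow> nat \<Rightarrow> complex mat" where
  "stabilizer n E i = on_qubit n i pauli_X *
     mat_prod_list n (map (\<lambda>j. on_qubit n j pauli_Z)
                           (filter (\<lambda>j. (i,j) \<in> E \<or> (j,i) \<in> E) [0..<n]))"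

definition stab_S :: "nat \<Rightarrow> (nat \<times> nat) set \<Rightarrow> (nat \<Rightarrow> bool) \<Rightarrow> complex mat" where
  "stab_S n E l = mat_prod_list n
     (map (\<lambda>i. stabilizer n E i ^\<^sub>m (of_bool (l i))) [0..<n])"

definition graph_hamiltonian :: "nat \<Rightarrow> (nat \<times> nat) set \<Rightarrow> complex mat" where
  "graph_hamiltonian n E = (-1) \<cdot>\<^sub>m mat_sum_list n (map (stabilizer n E) [0..<n])"

definition thermal_state :: "nat \<Rightarrow> (nat \<times> nat) set \<Rightarrow> real \<Rightarrow> complex mat" where
  "thermal_state n E \<beta> =
     (let A = mat_exp (complex_of_real (- \<beta>) \<cdot>\<^sub>m graph_hamiltonian n E)
      in (1 / trace_mat A) \<cdot>\<^sub>m A)"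

definition graph_fidelity :: "nat \<Rightarrow> (nat \<times> nat) set \<Rightarrow> complex mat \<Rightarrow> complex" where
  "graph_fidelity n E \<rho> = (\<rho> *\<^sub>v graph_state n E) \<bullet>c graph_state n E"

text \<open>Born-rule probability of outcome +1 when measuring the involutive observable S
  (projector onto its +1 eigenspace is (I+S)/2) on the state rho.\<close>
definition prob_plus :: "nat \<Rightarrow> complex mat \<Rightarrow> complex mat \<Rightarrow> real" where
  "prob_plus n S \<rho> = Re (trace_mat (((1/2) \<cdot>\<^sub>m (1\<^sub>m (2^n) + S)) * \<rho>))"

definition hamming_wt :: "nat \<Rightarrow> (nat \<Rightarrow> bool) \<Rightarrow> nat" where
  "hamming_wt n l = card {i. i < n \<and> l i}"

end

(* The vectors Z^a |G>, a in {0,1}^n, form an orthonormal basis of common eigenvectors of the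
   stabilizers: g_i Z^a |G> = (-1)^(a_i) Z^a |G>.  Hence H, rho_T and S_l are diagonal in this basis.
   Writing x = e^(-2 beta), rho_T has eigenvalue x^wt(a) / (1 + x)^n on Z^a |G>, so
   <G|rho_T|G> = 1 / (1 + x)^n, while measuring S_l gives +-1 outcomes with mean
   Tr (S_l rho_T) = prod_i (1 + (-1)^(l_i) x) / (1 + x)^n.  By the strong law of large numbers for
   bounded independent variables (Hoeffding's inequality and Borel-Cantelli) F_est converges almost
   surely to this mean, and the product expands as 1 + (n - 2 wt(l)) x + O(x^2). *)

theory Submission
  imports Defs
begin

section \<open>Sums and products over bit strings\<close>

lemma prod_list_map_upt: "prod_list (map f [0..<n]) = (\<Prod>i<n. f i)"
  by (simp add: prod.distinct_set_conv_list[symmetric] atLeast_upt)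

lemma sum_list_map_upt: "sum_list (map f [0..<n]) = (\<Sum>i<n. f i)"
  by (simp add: sum.distinct_set_conv_list[symmetric] atLeast_upt)

lemma prod_list_map_filter:
  "prod_list (map g (filter P xs)) = prod_list (map (\<lambda>x. if P x then g x else 1) xs)"
  by (induction xs) auto

lemma prod_list_map_concat:
  "prod_list (map g (concat xss)) = prod_list (map (\<lambda>xs. prod_list (map g xs)) xss)"
  by (induction xss) auto

lemma sum_lessThan_mult_2:
  fixes g :: "nat \<Rightarrow> 'a::comm_monoid_add"
  shows "(\<Sum>a<2*m. g a) = (\<Sum>a<m. g (2*a)) + (\<Sum>a<m. g (2*a+1))"
proof (induction m)
  case (Suc m)
  have "2 * Suc m = Suc (Suc (2*m))" by simp
  then show ?case using Suc by (simp add: algebra_simps)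
qed simp

lemma sum_pow2_prod_bit:
  fixes f :: "nat \<Rightarrow> bool \<Rightarrow> 'a::comm_semiring_1"
  shows "(\<Sum>a<(2::nat)^n. \<Prod>i<n. f i (bit a i)) = (\<Prod>i<n. f i False + f i True)"
proof (induction n arbitrary: f)
  case (Suc n)
  have "(\<Sum>a<(2::nat)^Suc n. \<Prod>i<Suc n. f i (bit a i))
     = (\<Sum>a<(2::nat)^n. \<Prod>i<Suc n. f i (bit (2*a) i))
       + (\<Sum>a<(2::nat)^n. \<Prod>i<Suc n. f i (bit (2*a+1) i))"
    by (simp add: sum_lessThan_mult_2)
  also have "\<dots> = (\<Sum>a<(2::nat)^n. f 0 False * (\<Prod>i<n. f (Suc i) (bit a i)))
       + (\<Sum>a<(2::nat)^n. f 0 True * (\<Prod>i<n. f (Suc i) (bit a i)))"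
    unfolding prod.lessThan_Suc_shift by (simp add: bit_Suc bit_0)
  also have "\<dots> = (f 0 False + f 0 True) * (\<Sum>a<(2::nat)^n. \<Prod>i<n. f (Suc i) (bit a i))"
    by (simp only: sum_distrib_left[symmetric] distrib_right)
  also have "\<dots> = (\<Prod>i<Suc n. f i False + f i True)"
    unfolding prod.lessThan_Suc_shift using Suc[of "\<lambda>i. f (Suc i)"] by simp
  finally show ?case .
qed simp

lemma bit_eq_less_pow2I:
  fixes x y :: nat
  assumes "x < 2^n" "y < 2^n" "\<And>j. j < n \<Longrightarrow> bit x j = bit y j"
  shows "x = y"
proof -
  have "take_bit n x = take_bit n y"
    by (rule bit_eqI) (use assms(3) in \<open>auto simp: bit_take_bit_iff\<close>)
  then show ?thesis using assms(1,2) by (simp add: take_bit_nat_eq_self)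
qed

lemma bit_less_pow2_imp_less:
  fixes x :: nat
  assumes "x < 2^n" "bit x j"
  shows "j < n"
  using assms by (metis bit_take_bit_iff take_bit_nat_eq_self)

lemma flip_bit_less_pow2:
  fixes x :: nat
  assumes "x < 2^n" "i < n"
  shows "flip_bit i x < 2^n"
proof -
  have "take_bit n (flip_bit i x) = flip_bit i x"
    by (rule bit_eqI) (use assms bit_less_pow2_imp_less in \<open>auto simp: bit_take_bit_iff bit_flip_bit_iff\<close>)
  then show ?thesis by (simp add: take_bit_nat_eq_self_iff)
qed

definition minus_one_pow :: "bool \<Rightarrow> 'a::ring_1" where
  "minus_one_pow b = (if b then -1 else 1)"

lemma minus_one_pow_simps [simp]:
  "minus_one_pow False = 1" "minus_one_pow True = -1"
  by (simp_all add: minus_one_pow_def)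

lemma minus_one_pow_mult_self [simp]: "minus_one_pow b * minus_one_pow b = 1"
  by (cases b) simp_all

lemma of_real_minus_one_pow [simp]: "of_real (minus_one_pow b) = minus_one_pow b"
  by (cases b) simp_all

lemma cnj_minus_one_pow [simp]: "cnj (minus_one_pow b) = minus_one_pow b"
  by (cases b) simp_all

section \<open>Eigenvectors, matrix exponential and trace\<close>

lemma smult_mat_mult_vec:
  "A \<in> carrier_mat m k \<Longrightarrow> v \<in> carrier_vec k \<Longrightarrow> (c \<cdot>\<^sub>m A) *\<^sub>v v = c \<cdot>\<^sub>v (A *\<^sub>v v)"
  by (intro eq_vecI) (auto simp: scalar_prod_def sum_distrib_left mult.assoc)

lemma mult_mat_vec_common_eigenvector:
  fixes A B :: "'a::field mat"
  assumes "A \<in> carrier_mat m m" "B \<in> carrier_mat m m" "v \<in> carrier_vec m"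
    and "A *\<^sub>v v = \<alpha> \<cdot>\<^sub>v v" "B *\<^sub>v v = \<beta> \<cdot>\<^sub>v v"
  shows "(A * B) *\<^sub>v v = (\<alpha> * \<beta>) \<cdot>\<^sub>v v"
  using assms by (simp add: mult_mat_vec[of _ m m] smult_smult_assoc mult.commute)

lemma pow_mat_eigenvector:
  fixes A :: "'a::field mat"
  assumes A: "A \<in> carrier_mat m m" and v: "v \<in> carrier_vec m" and ev: "A *\<^sub>v v = \<mu> \<cdot>\<^sub>v v"
  shows "(A ^\<^sub>m k) *\<^sub>v v = (\<mu> ^ k) \<cdot>\<^sub>v v"
proof (induction k)
  case (Suc k)
  have "(A ^\<^sub>m Suc k) *\<^sub>v v = (A ^\<^sub>m k) *\<^sub>v (A *\<^sub>v v)"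
    using A v by (simp add: assoc_mult_mat_vec[of _ m m])
  also have "\<dots> = \<mu> \<cdot>\<^sub>v ((A ^\<^sub>m k) *\<^sub>v v)"
    unfolding ev using A v by (intro mult_mat_vec[of _ m m]) auto
  also have "\<dots> = (\<mu> ^ Suc k) \<cdot>\<^sub>v v"
    unfolding Suc by (simp add: smult_smult_assoc mult.commute)
  finally show ?case .
qed (use A v in simp)

lemma mult_mat_vec_index_single_entry:
  assumes "A \<in> carrier_mat m m" "w \<in> carrier_vec m" "x < m" "y < m"
    and row: "\<And>c. c < m \<Longrightarrow> A $$ (x,c) = (if c = y then d else 0)"
  shows "(A *\<^sub>v w) $ x = d * w $ y"
proof -
  have "(A *\<^sub>v w) $ x = (\<Sum>c\<in>{0..<m}. A $$ (x,c) * w $ c)"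
    using assms by (simp add: scalar_prod_def row_def)
  also have "\<dots> = (\<Sum>c\<in>{0..<m}. if c = y then d * w $ c else 0)"
    by (rule sum.cong) (auto simp: row)
  also have "\<dots> = d * w $ y" using \<open>y < m\<close> by (simp add: sum.delta')
  finally show ?thesis .
qed

lemma norm_pow_mat_index_le:
  fixes A :: "complex mat"
  assumes A: "A \<in> carrier_mat m m" and "x < m" "y < m"
  defines "K \<equiv> (\<Sum>i<m. \<Sum>j<m. cmod (A $$ (i,j)))"
  shows "cmod ((A ^\<^sub>m k) $$ (x,y)) \<le> (real m * K) ^ k"
  using assms(2,3)
proof (induction k arbitrary: x y)
  case (Suc k)
  have K: "cmod (A $$ (z,y)) \<le> K" if "z < m" for z
  proof -
    have "cmod (A $$ (z,y)) \<le> (\<Sum>j<m. cmod (A $$ (z,j)))"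
      using Suc.prems(2) by (intro member_le_sum) auto
    also have "\<dots> \<le> K"
      unfolding K_def using that
      by (intro member_le_sum[where f = "\<lambda>i. \<Sum>j<m. cmod (A $$ (i,j))"]) (auto intro: sum_nonneg)
    finally show ?thesis .
  qed
  have "K \<ge> 0" unfolding K_def by (intro sum_nonneg) auto
  have "(A ^\<^sub>m Suc k) $$ (x,y) = (\<Sum>z\<in>{0..<m}. (A ^\<^sub>m k) $$ (x,z) * A $$ (z,y))"
    using A Suc.prems by (simp add: scalar_prod_def row_def col_def)
  then have "cmod ((A ^\<^sub>m Suc k) $$ (x,y)) \<le> (\<Sum>z\<in>{0..<m}. cmod ((A ^\<^sub>m k) $$ (x,z)) * cmod (A $$ (z,y)))"
    by (simp add: norm_mult[symmetric] norm_sum)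
  also have "\<dots> \<le> (\<Sum>z\<in>{0..<m}. (real m * K) ^ k * K)"
    by (intro sum_mono mult_mono Suc.IH K) (use Suc.prems \<open>K \<ge> 0\<close> in auto)
  also have "\<dots> = (real m * K) ^ Suc k" by (simp add: algebra_simps)
  finally show ?case .
qed (use A in simp)

lemma summable_pow_mat_index_over_fact:
  fixes A :: "complex mat"
  assumes "A \<in> carrier_mat m m" "x < m" "y < m"
  shows "summable (\<lambda>k. (A ^\<^sub>m k) $$ (x,y) / of_nat (fact k))"
proof (rule summable_comparison_test)
  define C where "C = real m * (\<Sum>i<m. \<Sum>j<m. cmod (A $$ (i,j)))"
  show "summable (\<lambda>k. C ^ k / fact k)"
    using summable_exp_generic[of C] by (simp add: divide_inverse mult.commute)
  show "\<exists>N. \<forall>k\<ge>N. norm ((A ^\<^sub>m k) $$ (x,y) / of_nat (fact k)) \<le> C ^ k / fact k"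
    unfolding C_def using norm_pow_mat_index_le[OF assms]
    by (auto simp: norm_divide intro!: divide_right_mono)
qed

lemma mat_exp_eigenvector:
  fixes A :: "complex mat"
  assumes A: "A \<in> carrier_mat m m" and v: "v \<in> carrier_vec m" and ev: "A *\<^sub>v v = \<mu> \<cdot>\<^sub>v v"
  shows "mat_exp A *\<^sub>v v = exp \<mu> \<cdot>\<^sub>v v"
proof (rule eq_vecI)
  fix x assume "x < dim_vec (exp \<mu> \<cdot>\<^sub>v v)"
  then have x: "x < m" using v by simp
  let ?a = "\<lambda>k y. (A ^\<^sub>m k) $$ (x,y) / of_nat (fact k) * v $ y"
  have summable: "summable (\<lambda>k. ?a k y)" if "y < m" for y
    using summable_pow_mat_index_over_fact[OF A x that] by (rule summable_mult2)
  have "(mat_exp A *\<^sub>v v) $ x = (\<Sum>y\<in>{0..<m}. mat_exp A $$ (x,y) * v $ y)"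
    using A v x by (simp add: mat_exp_def scalar_prod_def row_def)
  also have "\<dots> = (\<Sum>y\<in>{0..<m}. \<Sum>k. ?a k y)"
  proof (rule sum.cong[OF refl])
    fix y assume "y \<in> {0..<m}"
    then show "mat_exp A $$ (x,y) * v $ y = (\<Sum>k. ?a k y)"
      using suminf_mult2[OF summable_pow_mat_index_over_fact[OF A x, of y], of "v $ y"] A x
      by (simp add: mat_exp_def)
  qed
  also have "\<dots> = (\<Sum>k. \<Sum>y\<in>{0..<m}. ?a k y)"
    using summable by (intro suminf_sum[symmetric]) auto
  also have "\<dots> = (\<Sum>k. ((A ^\<^sub>m k) *\<^sub>v v) $ x / of_nat (fact k))"
    using A v x by (simp add: scalar_prod_def row_def sum_divide_distrib algebra_simps)
  also have "\<dots> = (\<Sum>k. \<mu> ^ k / of_nat (fact k) * v $ x)"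
    using x v by (simp add: pow_mat_eigenvector[OF A v ev])
  also have "\<dots> = (\<Sum>k. \<mu> ^ k / of_nat (fact k)) * v $ x"
    using summable_exp_generic[of \<mu>]
    by (intro suminf_mult2[symmetric]) (simp add: scaleR_conv_of_real divide_inverse mult.commute)
  also have "(\<Sum>k. \<mu> ^ k / of_nat (fact k)) = exp \<mu>"
    by (simp add: exp_def scaleR_conv_of_real divide_inverse mult.commute)
  finally show "(mat_exp A *\<^sub>v v) $ x = (exp \<mu> \<cdot>\<^sub>v v) $ x" using x v by simp
qed (use v A in \<open>simp add: mat_exp_def\<close>)

lemma trace_mat_orthonormal_basis:
  fixes M :: "complex mat" and b :: "'i \<Rightarrow> complex vec"
  assumes M: "M \<in> carrier_mat m m" and b: "\<And>a. a \<in> I \<Longrightarrow> b a \<in> carrier_vec m"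
    and complete: "\<And>x y. x < m \<Longrightarrow> y < m \<Longrightarrow>
      (\<Sum>a\<in>I. b a $ y * cnj (b a $ x)) = (if x = y then 1 else 0)"
  shows "trace_mat M = (\<Sum>a\<in>I. (M *\<^sub>v b a) \<bullet>c b a)"
proof -
  have "(M *\<^sub>v b a) \<bullet>c b a = (\<Sum>x<m. \<Sum>y<m. M $$ (x,y) * (b a $ y * cnj (b a $ x)))"
    if "a \<in> I" for a
    using M b[OF that] by (simp add: scalar_prod_def row_def sum_distrib_right atLeast0LessThan mult.assoc)
  then have "(\<Sum>a\<in>I. (M *\<^sub>v b a) \<bullet>c b a)
      = (\<Sum>x<m. \<Sum>y<m. M $$ (x,y) * (\<Sum>a\<in>I. b a $ y * cnj (b a $ x)))"
    by (simp add: sum_distrib_left sum.swap[of _ I])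
  also have "\<dots> = (\<Sum>x<m. \<Sum>y<m. if y = x then M $$ (x,y) else 0)"
    by (intro sum.cong refl) (auto simp: complete)
  also have "\<dots> = trace_mat M" using M by (simp add: trace_mat_def)
  finally show ?thesis by simp
qed

section \<open>Qubit gates\<close>

lemma on_qubit_carrier [simp]: "on_qubit n i U \<in> carrier_mat (2^n) (2^n)"
  by (simp add: on_qubit_def)

lemma CZ_carrier [simp]: "CZ n i j \<in> carrier_mat (2^n) (2^n)"
  by (simp add: CZ_def)

lemma mat_prod_list_carrier:
  "(\<And>A. A \<in> set As \<Longrightarrow> A \<in> carrier_mat (2^n) (2^n)) \<Longrightarrow> mat_prod_list n As \<in> carrier_mat (2^n) (2^n)"
  by (induction As) (auto simp: mat_prod_list_def intro!: mult_carrier_mat)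

lemma mat_sum_list_carrier:
  "(\<And>A. A \<in> set As \<Longrightarrow> A \<in> carrier_mat (2^n) (2^n)) \<Longrightarrow> mat_sum_list n As \<in> carrier_mat (2^n) (2^n)"
  by (induction As) (auto simp: mat_sum_list_def intro!: add_carrier_mat)

lemma mat_prod_list_Cons_mult_vec:
  assumes "\<And>B. B \<in> set (A # As) \<Longrightarrow> B \<in> carrier_mat (2^n) (2^n)" "w \<in> carrier_vec (2^n)"
  shows "mat_prod_list n (A # As) *\<^sub>v w = A *\<^sub>v (mat_prod_list n As *\<^sub>v w)"
  using assms mat_prod_list_carrier[of As n]
  by (simp add: mat_prod_list_def[of n "A # As"] mat_prod_list_def[of n As, symmetric]
      assoc_mult_mat_vec[of _ "2^n" "2^n"])

lemma mat_prod_list_diagonal_mult_vec: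
  assumes "\<And>y w. y \<in> set ys \<Longrightarrow> w \<in> carrier_vec (2^n) \<Longrightarrow> F y *\<^sub>v w = vec (2^n) (\<lambda>x. d y x * w $ x)"
    and "\<And>y. y \<in> set ys \<Longrightarrow> F y \<in> carrier_mat (2^n) (2^n)"
    and w: "w \<in> carrier_vec (2^n)"
  shows "mat_prod_list n (map F ys) *\<^sub>v w = vec (2^n) (\<lambda>x. prod_list (map (\<lambda>y. d y x) ys) * w $ x)"
  using assms(1,2)
proof (induction ys)
  case (Cons y ys)
  have "mat_prod_list n (map F (y # ys)) *\<^sub>v w = F y *\<^sub>v (mat_prod_list n (map F ys) *\<^sub>v w)"
    unfolding list.map using Cons.prems w by (intro mat_prod_list_Cons_mult_vec) auto
  then show ?case using Cons by (auto simp: mult.assoc)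
qed (use w in \<open>auto simp: mat_prod_list_def\<close>)

lemma mat_prod_list_eigenvector:
  assumes "\<And>y. y \<in> set ys \<Longrightarrow> F y \<in> carrier_mat (2^n) (2^n)"
    and "\<And>y. y \<in> set ys \<Longrightarrow> F y *\<^sub>v v = c y \<cdot>\<^sub>v v" and v: "v \<in> carrier_vec (2^n)"
  shows "mat_prod_list n (map F ys) *\<^sub>v v = prod_list (map c ys) \<cdot>\<^sub>v v"
  using assms(1,2)
proof (induction ys)
  case (Cons y ys)
  have "mat_prod_list n (map F (y # ys)) *\<^sub>v v = F y *\<^sub>v (mat_prod_list n (map F ys) *\<^sub>v v)"
    unfolding list.map using Cons.prems v by (intro mat_prod_list_Cons_mult_vec) auto
  also have "\<dots> = F y *\<^sub>v (prod_list (map c ys) \<cdot>\<^sub>v v)"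
    using Cons by simp
  also have "\<dots> = prod_list (map c (y # ys)) \<cdot>\<^sub>v v"
    using Cons.prems v by (simp add: mult_mat_vec[of _ "2^n" "2^n"] smult_smult_assoc mult.commute)
  finally show ?case .
qed (use v in \<open>simp add: mat_prod_list_def\<close>)

lemma mat_sum_list_eigenvector:
  assumes "\<And>y. y \<in> set ys \<Longrightarrow> F y \<in> carrier_mat (2^n) (2^n)"
    and "\<And>y. y \<in> set ys \<Longrightarrow> F y *\<^sub>v v = c y \<cdot>\<^sub>v v" and v: "v \<in> carrier_vec (2^n)"
  shows "mat_sum_list n (map F ys) *\<^sub>v v = sum_list (map c ys) \<cdot>\<^sub>v v"
  using assms(1,2)
proof (induction ys)
  case (Cons y ys)
  have "mat_sum_list n (map F ys) \<in> carrier_mat (2^n) (2^n)"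
    using Cons.prems by (intro mat_sum_list_carrier) auto
  then show ?case
    using Cons v by (simp add: mat_sum_list_def add_mult_distrib_mat_vec[of _ "2^n" "2^n"] add_smult_distrib_vec)
qed (use v in \<open>auto simp: mat_sum_list_def\<close>)

lemma CZ_mult_vec:
  assumes w: "w \<in> carrier_vec (2^n)"
  shows "CZ n i j *\<^sub>v w = vec (2^n) (\<lambda>x. minus_one_pow (bit x i \<and> bit x j) * w $ x)"
proof (rule eq_vecI)
  fix x assume "x < dim_vec (vec (2^n) (\<lambda>x. minus_one_pow (bit x i \<and> bit x j) * w $ x))"
  then have x: "x < 2^n" by simp
  have "(CZ n i j *\<^sub>v w) $ x = minus_one_pow (bit x i \<and> bit x j) * w $ x"
    by (rule mult_mat_vec_index_single_entry[OF CZ_carrier w x x]) (auto simp: CZ_def x)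
  then show "(CZ n i j *\<^sub>v w) $ x = vec (2^n) (\<lambda>x. minus_one_pow (bit x i \<and> bit x j) * w $ x) $ x"
    using x by simp
qed (simp add: CZ_def)

lemma on_qubit_X_index:
  assumes "x < 2^n" "c < 2^n" "i < n"
  shows "on_qubit n i pauli_X $$ (x,c) = (if c = flip_bit i x then 1 else 0)"
proof -
  have "((\<forall>j<n. j \<noteq> i \<longrightarrow> bit x j = bit c j) \<and> bit x i \<noteq> bit c i) \<longleftrightarrow> c = flip_bit i x"
    using bit_eq_less_pow2I[OF assms(2) flip_bit_less_pow2[OF assms(1,3)]]
    by (auto simp: bit_flip_bit_iff)
  moreover have "pauli_X $$ (of_bool a, of_bool b) = (if a \<noteq> b then 1 else 0)" for a b
    by (cases a; cases b) (simp_all add: pauli_X_def)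
  ultimately show ?thesis using assms by (auto simp: on_qubit_def)
qed

lemma on_qubit_Z_index:
  assumes "x < 2^n" "c < 2^n" "j < n"
  shows "on_qubit n j pauli_Z $$ (x,c) = (if c = x then minus_one_pow (bit x j) else 0)"
proof -
  have "((\<forall>k<n. k \<noteq> j \<longrightarrow> bit x k = bit c k) \<and> bit x j = bit c j) \<longleftrightarrow> c = x"
    using bit_eq_less_pow2I[OF assms(2,1)] by auto
  moreover have "pauli_Z $$ (of_bool a, of_bool b) = (if a = b then minus_one_pow a else 0)" for a b
    by (cases a; cases b) (simp_all add: pauli_Z_def)
  ultimately show ?thesis using assms by (auto simp: on_qubit_def)
qed

lemma on_qubit_X_mult_vec:
  assumes w: "w \<in> carrier_vec (2^n)" and i: "i < n"
  shows "on_qubit n i pauli_X *\<^sub>v w = vec (2^n) (\<lambda>x. w $ flip_bit i x)"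
proof (rule eq_vecI)
  fix x assume "x < dim_vec (vec (2^n) (\<lambda>x. w $ flip_bit i x))"
  then have x: "x < 2^n" by simp
  have "(on_qubit n i pauli_X *\<^sub>v w) $ x = 1 * w $ flip_bit i x"
    by (rule mult_mat_vec_index_single_entry[OF on_qubit_carrier w x flip_bit_less_pow2[OF x i]])
      (simp add: on_qubit_X_index x i)
  then show "(on_qubit n i pauli_X *\<^sub>v w) $ x = vec (2^n) (\<lambda>x. w $ flip_bit i x) $ x"
    using x by simp
qed (simp add: on_qubit_def)

lemma on_qubit_Z_mult_vec:
  assumes w: "w \<in> carrier_vec (2^n)" and j: "j < n"
  shows "on_qubit n j pauli_Z *\<^sub>v w = vec (2^n) (\<lambda>x. minus_one_pow (bit x j) * w $ x)"
proof (rule eq_vecI)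
  fix x assume "x < dim_vec (vec (2^n) (\<lambda>x. minus_one_pow (bit x j) * w $ x))"
  then have x: "x < 2^n" by simp
  have "(on_qubit n j pauli_Z *\<^sub>v w) $ x = minus_one_pow (bit x j) * w $ x"
    by (rule mult_mat_vec_index_single_entry[OF on_qubit_carrier w x x]) (simp add: on_qubit_Z_index x j)
  then show "(on_qubit n j pauli_Z *\<^sub>v w) $ x = vec (2^n) (\<lambda>x. minus_one_pow (bit x j) * w $ x) $ x"
    using x by simp
qed (simp add: on_qubit_def)

section \<open>The graph-state basis\<close>

definition walsh_sign :: "nat \<Rightarrow> nat \<Rightarrow> nat \<Rightarrow> complex" where
  "walsh_sign n a x = (\<Prod>i<n. minus_one_pow (bit a i \<and> bit x i))"

definition edge_sign :: "nat \<Rightarrow> (nat \<times> nat) set \<Rightarrow> nat \<Rightarrow> complex" where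
  "edge_sign n E x = (\<Prod>p<n. \<Prod>q<n. minus_one_pow ((p,q) \<in> E \<and> bit x p \<and> bit x q))"

definition neighbour_sign :: "nat \<Rightarrow> (nat \<times> nat) set \<Rightarrow> nat \<Rightarrow> nat \<Rightarrow> complex" where
  "neighbour_sign n E i x = (\<Prod>j<n. minus_one_pow (((i,j) \<in> E \<or> (j,i) \<in> E) \<and> bit x j))"

text \<open>The vector \<open>Z\<^sup>a |G\<rangle>\<close>, where \<open>Z\<^sup>a\<close> applies \<open>Z\<close> to every qubit \<open>i\<close> with \<open>bit a i\<close>.\<close>

definition graph_basis :: "nat \<Rightarrow> (nat \<times> nat) set \<Rightarrow> nat \<Rightarrow> complex vec" where
  "graph_basis n E a =
     vec (2^n) (\<lambda>x. complex_of_real (1 / sqrt (2^n)) * walsh_sign n a x * edge_sign n E x)"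

lemma graph_basis_carrier [simp]: "graph_basis n E a \<in> carrier_vec (2^n)"
  by (simp add: graph_basis_def)

lemma dim_vec_graph_basis [simp]: "dim_vec (graph_basis n E a) = 2^n"
  by (simp add: graph_basis_def)

lemma index_graph_basis:
  "x < 2^n \<Longrightarrow> graph_basis n E a $ x
     = complex_of_real (1 / sqrt (2^n)) * walsh_sign n a x * edge_sign n E x"
  by (simp add: graph_basis_def)

lemma walsh_sign_mult_self [simp]: "walsh_sign n a x * walsh_sign n a x = 1"
  by (simp add: walsh_sign_def prod.distrib[symmetric])

lemma edge_sign_mult_self [simp]: "edge_sign n E x * edge_sign n E x = 1"
  by (simp add: edge_sign_def prod.distrib[symmetric])

lemma neighbour_sign_mult_self [simp]: "neighbour_sign n E i x * neighbour_sign n E i x = 1"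
  by (simp add: neighbour_sign_def prod.distrib[symmetric])

lemma cnj_walsh_sign [simp]: "cnj (walsh_sign n a x) = walsh_sign n a x"
  by (simp add: walsh_sign_def cnj_prod)

lemma cnj_edge_sign [simp]: "cnj (edge_sign n E x) = edge_sign n E x"
  by (simp add: edge_sign_def cnj_prod)

lemma of_real_sqrt_pow2_squared:
  "complex_of_real (sqrt (2^n)) * complex_of_real (sqrt (2^n)) = 2^n"
  by (simp del: of_real_mult add: of_real_mult[symmetric])

lemma graph_basis_index_mult_cnj:
  assumes "x < 2^n" "y < 2^n"
  shows "graph_basis n E a $ y * cnj (graph_basis n E a $ x)
    = walsh_sign n a y * walsh_sign n a x * edge_sign n E y * edge_sign n E x / 2^n"
  using assms by (simp add: index_graph_basis of_real_sqrt_pow2_squared algebra_simps)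

lemma sum_walsh_sign:
  assumes x: "x < 2^n" and y: "y < 2^n"
  shows "(\<Sum>a<(2::nat)^n. walsh_sign n a y * walsh_sign n a x) = (if x = y then 2^n else 0)"
proof -
  have "(\<Sum>a<(2::nat)^n. walsh_sign n a y * walsh_sign n a x)
      = (\<Prod>i<n. 1 + minus_one_pow (bit y i) * minus_one_pow (bit x i))"
    unfolding walsh_sign_def prod.distrib[symmetric] by (subst sum_pow2_prod_bit) simp
  also have "\<dots> = (if x = y then 2^n else 0)"
  proof (cases "x = y")
    case False
    then obtain i where "i < n" "bit x i \<noteq> bit y i"
      using bit_eq_less_pow2I[OF x y] by blast
    then have "1 + minus_one_pow (bit y i) * minus_one_pow (bit x i) = (0::complex)"
      by (cases "bit x i") auto
    with \<open>i < n\<close> False show ?thesis by (auto simp: prod_zero_iff intro!: bexI[of _ i])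
  qed simp
  finally show ?thesis .
qed

lemma graph_basis_complete:
  assumes "x < 2^n" "y < 2^n"
  shows "(\<Sum>a<(2::nat)^n. graph_basis n E a $ y * cnj (graph_basis n E a $ x)) = (if x = y then 1 else 0)"
proof -
  have "(\<Sum>a<(2::nat)^n. graph_basis n E a $ y * cnj (graph_basis n E a $ x))
      = edge_sign n E y * edge_sign n E x / 2^n * (\<Sum>a<(2::nat)^n. walsh_sign n a y * walsh_sign n a x)"
    using assms by (simp add: graph_basis_index_mult_cnj sum_distrib_left algebra_simps)
  then show ?thesis using assms by (simp add: sum_walsh_sign)
qed

lemma graph_basis_normalized: "graph_basis n E a \<bullet>c graph_basis n E a = 1"
  by (simp add: scalar_prod_def graph_basis_index_mult_cnj)

lemma trace_mat_graph_eigenbasis: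
  assumes M: "M \<in> carrier_mat (2^n) (2^n)"
    and eig: "\<And>a. a < 2^n \<Longrightarrow> M *\<^sub>v graph_basis n E a = \<mu> a \<cdot>\<^sub>v graph_basis n E a"
  shows "trace_mat M = (\<Sum>a<(2::nat)^n. \<mu> a)"
proof -
  have "trace_mat M = (\<Sum>a<(2::nat)^n. (M *\<^sub>v graph_basis n E a) \<bullet>c graph_basis n E a)"
    by (rule trace_mat_orthonormal_basis[OF M]) (simp_all add: graph_basis_complete)
  also have "\<dots> = (\<Sum>a<(2::nat)^n. \<mu> a)"
    by (intro sum.cong refl) (simp add: eig graph_basis_normalized)
  finally show ?thesis .
qed

lemma graph_state_eq_graph_basis: "graph_state n E = graph_basis n E 0"
proof -
  have "prod_list (map (\<lambda>(i,j). minus_one_pow (bit x i \<and> bit x j)) (edge_list n E)) = edge_sign n E x" for x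
    unfolding edge_list_def prod_list_map_filter prod_list_map_concat map_map edge_sign_def
    by (simp add: comp_def prod_list_map_upt, intro prod.cong refl) (auto simp: minus_one_pow_def)
  moreover have "graph_state n E = vec (2^n) (\<lambda>x.
      prod_list (map (\<lambda>(i,j). minus_one_pow (bit x i \<and> bit x j)) (edge_list n E)) * plus_state n $ x)"
    unfolding graph_state_def
    by (rule mat_prod_list_diagonal_mult_vec) (auto simp: CZ_mult_vec plus_state_def)
  ultimately show ?thesis
    by (auto simp: graph_basis_def walsh_sign_def plus_state_def)
qed

lemma simple_graph_edgeD: "simple_graph n E \<Longrightarrow> (i,j) \<in> E \<Longrightarrow> i < j \<and> j < n"
  by (auto simp: simple_graph_def)

lemma stabilizer_carrier [simp]: "stabilizer n E i \<in> carrier_mat (2^n) (2^n)"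
  unfolding stabilizer_def by (intro mult_carrier_mat[OF on_qubit_carrier] mat_prod_list_carrier) auto

lemma stabilizer_mult_vec:
  assumes w: "w \<in> carrier_vec (2^n)" and i: "i < n"
  shows "stabilizer n E i *\<^sub>v w = vec (2^n) (\<lambda>x. neighbour_sign n E i (flip_bit i x) * w $ flip_bit i x)"
proof -
  let ?Z = "mat_prod_list n (map (\<lambda>j. on_qubit n j pauli_Z) (filter (\<lambda>j. (i,j) \<in> E \<or> (j,i) \<in> E) [0..<n]))"
  have "?Z \<in> carrier_mat (2^n) (2^n)" by (intro mat_prod_list_carrier) auto
  then have "stabilizer n E i *\<^sub>v w = on_qubit n i pauli_X *\<^sub>v (?Z *\<^sub>v w)"
    unfolding stabilizer_def using w by (simp add: assoc_mult_mat_vec[of _ "2^n" "2^n"])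
  also have "?Z *\<^sub>v w = vec (2^n) (\<lambda>x. prod_list (map (\<lambda>j. minus_one_pow (bit x j))
      (filter (\<lambda>j. (i,j) \<in> E \<or> (j,i) \<in> E) [0..<n])) * w $ x)"
    by (rule mat_prod_list_diagonal_mult_vec[OF _ _ w]) (auto simp: on_qubit_Z_mult_vec)
  also have "\<dots> = vec (2^n) (\<lambda>x. neighbour_sign n E i x * w $ x)"
    unfolding prod_list_map_filter neighbour_sign_def prod_list_map_upt
    by (intro eq_vecI) (auto intro!: prod.cong)
  finally show ?thesis
    by (auto simp: on_qubit_X_mult_vec i flip_bit_less_pow2)
qed

lemma neighbour_sign_flip_bit:
  assumes "simple_graph n E"
  shows "neighbour_sign n E i (flip_bit i x) = neighbour_sign n E i x"
  unfolding neighbour_sign_def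
proof (intro prod.cong refl)
  fix j
  have "(((i,j) \<in> E \<or> (j,i) \<in> E) \<and> bit (flip_bit i x) j) \<longleftrightarrow> (((i,j) \<in> E \<or> (j,i) \<in> E) \<and> bit x j)"
    using simple_graph_edgeD[OF assms] by (auto simp: bit_flip_bit_iff)
  then show "minus_one_pow (((i,j) \<in> E \<or> (j,i) \<in> E) \<and> bit (flip_bit i x) j)
    = (minus_one_pow (((i,j) \<in> E \<or> (j,i) \<in> E) \<and> bit x j) :: complex)"
    by simp
qed

lemma walsh_sign_flip_bit:
  assumes "i < n"
  shows "walsh_sign n a (flip_bit i x) = minus_one_pow (bit a i) * walsh_sign n a x"
proof -
  have "walsh_sign n a (flip_bit i x)
      = (\<Prod>k<n. minus_one_pow (bit a k \<and> bit x k) * (if k = i then minus_one_pow (bit a i) else 1))"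
    unfolding walsh_sign_def by (intro prod.cong refl) (auto simp: bit_flip_bit_iff minus_one_pow_def)
  then show ?thesis
    using assms by (simp add: prod.distrib walsh_sign_def prod.delta)
qed

lemma edge_sign_flip_bit:
  assumes G: "simple_graph n E" and i: "i < n"
  shows "edge_sign n E (flip_bit i x) = edge_sign n E x * neighbour_sign n E i x"
proof -
  let ?s = "\<lambda>P. minus_one_pow P :: complex"
  have edge: "?s ((p,q) \<in> E \<and> bit (flip_bit i x) p \<and> bit (flip_bit i x) q)
      = ?s ((p,q) \<in> E \<and> bit x p \<and> bit x q)
        * (if p = i then ?s ((i,q) \<in> E \<and> bit x q) else 1)
        * (if q = i then ?s ((p,i) \<in> E \<and> bit x p) else 1)" for p q
  proof (cases "(p,q) \<in> E")
    case True
    then have "p \<noteq> q" using simple_graph_edgeD[OF G] by blast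
    with True show ?thesis by (auto simp: bit_flip_bit_iff minus_one_pow_def)
  qed auto
  have out_in: "(\<Prod>q<n. ?s ((i,q) \<in> E \<and> bit x q)) * (\<Prod>p<n. ?s ((p,i) \<in> E \<and> bit x p))
      = neighbour_sign n E i x"
    unfolding neighbour_sign_def prod.distrib[symmetric]
  proof (intro prod.cong refl)
    fix j
    have "\<not> ((i,j) \<in> E \<and> (j,i) \<in> E)" using simple_graph_edgeD[OF G, of i j] simple_graph_edgeD[OF G, of j i] by linarith
    then show "?s ((i,j) \<in> E \<and> bit x j) * ?s ((j,i) \<in> E \<and> bit x j)
      = ?s (((i,j) \<in> E \<or> (j,i) \<in> E) \<and> bit x j)"
      by (auto simp: minus_one_pow_def)
  qed
  have "edge_sign n E (flip_bit i x) = edge_sign n E x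
      * (\<Prod>p<n. \<Prod>q<n. if p = i then ?s ((i,q) \<in> E \<and> bit x q) else 1)
      * (\<Prod>p<n. \<Prod>q<n. if q = i then ?s ((p,i) \<in> E \<and> bit x p) else 1)"
    unfolding edge_sign_def edge prod.distrib ..
  also have "(\<Prod>p<n. \<Prod>q<n. if p = i then ?s ((i,q) \<in> E \<and> bit x q) else 1)
      = (\<Prod>p<n. if p = i then \<Prod>q<n. ?s ((i,q) \<in> E \<and> bit x q) else 1)"
    by (intro prod.cong) simp_all
  also have "(\<Prod>p<n. \<Prod>q<n. if q = i then ?s ((p,i) \<in> E \<and> bit x p) else 1)
      = (\<Prod>p<n. ?s ((p,i) \<in> E \<and> bit x p))"
    using i by (simp add: prod.delta)
  finally show ?thesis
    using i by (simp add: prod.delta out_in[symmetric] mult.assoc)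
qed

lemma stabilizer_graph_basis:
  assumes G: "simple_graph n E" and i: "i < n"
  shows "stabilizer n E i *\<^sub>v graph_basis n E a = minus_one_pow (bit a i) \<cdot>\<^sub>v graph_basis n E a"
proof (rule eq_vecI)
  fix x assume "x < dim_vec (minus_one_pow (bit a i) \<cdot>\<^sub>v graph_basis n E a)"
  then have x: "x < 2^n" by simp
  then show "(stabilizer n E i *\<^sub>v graph_basis n E a) $ x = (minus_one_pow (bit a i) \<cdot>\<^sub>v graph_basis n E a) $ x"
    \<comment> \<open>flipping bit \<open>i\<close> multiplies the edge sign by the neighbour sign, which the \<open>Z\<close> factors
      of \<open>g\<^sub>i\<close> cancel, and the Walsh sign by \<open>(-1)\<^bsup>a\<^sub>i\<^esup>\<close>\<close>
    using flip_bit_less_pow2[OF x i]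
    by (simp add: stabilizer_mult_vec i index_graph_basis neighbour_sign_flip_bit[OF G]
        walsh_sign_flip_bit[OF i] edge_sign_flip_bit[OF G i] algebra_simps)
qed (simp add: stabilizer_mult_vec i)

section \<open>Thermal graph states and stabilizer measurements\<close>

lemma stab_S_carrier: "stab_S n E l \<in> carrier_mat (2^n) (2^n)"
  unfolding stab_S_def by (intro mat_prod_list_carrier) auto

lemma stab_S_graph_basis:
  assumes G: "simple_graph n E"
  shows "stab_S n E l *\<^sub>v graph_basis n E a = (\<Prod>i<n. minus_one_pow (l i \<and> bit a i)) \<cdot>\<^sub>v graph_basis n E a"
proof -
  have "stabilizer n E i ^\<^sub>m of_bool (l i) *\<^sub>v graph_basis n E a
      = minus_one_pow (l i \<and> bit a i) \<cdot>\<^sub>v graph_basis n E a" if "i < n" for i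
    using stabilizer_graph_basis[OF G that] carrier_matD(1)[OF stabilizer_carrier[of n E i]]
    by (cases "l i") auto
  then show ?thesis
    unfolding stab_S_def by (subst mat_prod_list_eigenvector) (auto simp: prod_list_map_upt)
qed

lemma graph_hamiltonian_carrier: "graph_hamiltonian n E \<in> carrier_mat (2^n) (2^n)"
  unfolding graph_hamiltonian_def by (intro smult_carrier_mat mat_sum_list_carrier) auto

lemma graph_hamiltonian_graph_basis:
  assumes G: "simple_graph n E"
  shows "graph_hamiltonian n E *\<^sub>v graph_basis n E a
    = (- (\<Sum>i<n. minus_one_pow (bit a i))) \<cdot>\<^sub>v graph_basis n E a"
proof -
  have S: "mat_sum_list n (map (stabilizer n E) [0..<n]) \<in> carrier_mat (2^n) (2^n)"
    by (intro mat_sum_list_carrier) auto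
  have "mat_sum_list n (map (stabilizer n E) [0..<n]) *\<^sub>v graph_basis n E a
      = (\<Sum>i<n. minus_one_pow (bit a i)) \<cdot>\<^sub>v graph_basis n E a"
    by (subst mat_sum_list_eigenvector) (auto simp: stabilizer_graph_basis[OF G] sum_list_map_upt)
  then show ?thesis
    unfolding graph_hamiltonian_def by (simp add: smult_mat_mult_vec[OF S] smult_smult_assoc)
qed

text \<open>The Boltzmann weight \<open>e\<^bsup>\<beta> \<Sum>\<^sub>i (-1)\<^bsup>a\<^sub>i\<^esup>\<^esup> / (2 cosh \<beta>)\<^sup>n\<close> of \<open>Z\<^sup>a |G\<rangle>\<close>, written in terms of \<open>e\<^bsup>-2\<beta>\<^esup>\<close>.\<close>

definition thermal_weight :: "real \<Rightarrow> nat \<Rightarrow> nat \<Rightarrow> real" where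
  "thermal_weight \<beta> n a = (\<Prod>i<n. (if bit a i then exp (-2*\<beta>) else 1) / (1 + exp (-2*\<beta>)))"

lemma exp_minus_one_pow_divide:
  fixes \<beta> :: real
  shows "exp (\<beta> * minus_one_pow b) / (exp \<beta> + exp (-\<beta>))
    = (if b then exp (-2*\<beta>) else 1) / (1 + exp (-2*\<beta>))"
proof -
  have sum: "exp \<beta> + exp (-\<beta>) = exp \<beta> * (1 + exp (-2*\<beta>))"
    and minus: "exp (-\<beta>) = exp \<beta> * exp (-2*\<beta>)"
    by (simp_all add: distrib_left flip: exp_add)
  show ?thesis unfolding sum by (cases b) (simp_all add: minus)
qed

lemma mat_exp_graph_hamiltonian_graph_basis:
  fixes \<beta> :: real
  assumes G: "simple_graph n E"
  shows "mat_exp (complex_of_real (- \<beta>) \<cdot>\<^sub>m graph_hamiltonian n E) *\<^sub>v graph_basis n E a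
    = complex_of_real (\<Prod>i<n. exp (\<beta> * minus_one_pow (bit a i))) \<cdot>\<^sub>v graph_basis n E a"
proof -
  have "(complex_of_real (- \<beta>) \<cdot>\<^sub>m graph_hamiltonian n E) *\<^sub>v graph_basis n E a
      = complex_of_real (\<beta> * (\<Sum>i<n. minus_one_pow (bit a i))) \<cdot>\<^sub>v graph_basis n E a"
    by (simp add: smult_mat_mult_vec[OF graph_hamiltonian_carrier]
        graph_hamiltonian_graph_basis[OF G] smult_smult_assoc)
  then show ?thesis
    using graph_hamiltonian_carrier[of n E]
    by (subst mat_exp_eigenvector) (auto simp: sum_distrib_left exp_sum simp flip: exp_of_real)
qed

lemma trace_mat_exp_graph_hamiltonian:
  fixes \<beta> :: real
  assumes G: "simple_graph n E"
  shows "trace_mat (mat_exp (complex_of_real (- \<beta>) \<cdot>\<^sub>m graph_hamiltonian n E))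
    = complex_of_real ((exp \<beta> + exp (-\<beta>)) ^ n)"
proof -
  have "trace_mat (mat_exp (complex_of_real (- \<beta>) \<cdot>\<^sub>m graph_hamiltonian n E))
      = (\<Sum>a<(2::nat)^n. complex_of_real (\<Prod>i<n. exp (\<beta> * minus_one_pow (bit a i))))"
    using graph_hamiltonian_carrier[of n E]
    by (intro trace_mat_graph_eigenbasis[where E = E] mat_exp_graph_hamiltonian_graph_basis[OF G])
      (simp add: mat_exp_def)
  also have "\<dots> = complex_of_real ((exp \<beta> + exp (-\<beta>)) ^ n)"
    unfolding of_real_sum[symmetric] by (subst sum_pow2_prod_bit) (simp add: add.commute)
  finally show ?thesis .
qed

lemma thermal_state_carrier: "thermal_state n E \<beta> \<in> carrier_mat (2^n) (2^n)"
  using graph_hamiltonian_carrier[of n E] by (simp add: thermal_state_def Let_def mat_exp_def)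

lemma thermal_state_graph_basis:
  fixes \<beta> :: real
  assumes G: "simple_graph n E"
  shows "thermal_state n E \<beta> *\<^sub>v graph_basis n E a
    = complex_of_real (thermal_weight \<beta> n a) \<cdot>\<^sub>v graph_basis n E a"
proof -
  let ?A = "mat_exp (complex_of_real (- \<beta>) \<cdot>\<^sub>m graph_hamiltonian n E)"
  have A: "?A \<in> carrier_mat (2^n) (2^n)"
    using graph_hamiltonian_carrier[of n E] by (simp add: mat_exp_def)
  have "thermal_state n E \<beta> *\<^sub>v graph_basis n E a
      = (1 / complex_of_real ((exp \<beta> + exp (-\<beta>)) ^ n)) \<cdot>\<^sub>v (?A *\<^sub>v graph_basis n E a)"
    unfolding thermal_state_def Let_def trace_mat_exp_graph_hamiltonian[OF G]
    by (rule smult_mat_mult_vec[OF A graph_basis_carrier])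
  also have "\<dots> = (1 / complex_of_real ((exp \<beta> + exp (-\<beta>)) ^ n)
      * complex_of_real (\<Prod>i<n. exp (\<beta> * minus_one_pow (bit a i)))) \<cdot>\<^sub>v graph_basis n E a"
    unfolding mat_exp_graph_hamiltonian_graph_basis[OF G] smult_smult_assoc ..
  also have "1 / complex_of_real ((exp \<beta> + exp (-\<beta>)) ^ n)
      * complex_of_real (\<Prod>i<n. exp (\<beta> * minus_one_pow (bit a i)))
      = complex_of_real (\<Prod>i<n. exp (\<beta> * minus_one_pow (bit a i)) / (exp \<beta> + exp (-\<beta>)))"
    by (simp add: prod_dividef)
  also have "(\<Prod>i<n. exp (\<beta> * minus_one_pow (bit a i)) / (exp \<beta> + exp (-\<beta>))) = thermal_weight \<beta> n a"
    unfolding thermal_weight_def exp_minus_one_pow_divide ..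
  finally show ?thesis .
qed

lemma sum_thermal_weight: "(\<Sum>a<(2::nat)^n. thermal_weight \<beta> n a) = 1"
proof -
  have "1 + exp (-2*\<beta>) \<noteq> 0" using exp_gt_zero[of "-2*\<beta>"] by linarith
  then show ?thesis
    unfolding thermal_weight_def by (subst sum_pow2_prod_bit) (simp add: add_divide_distrib[symmetric])
qed

lemma graph_fidelity_thermal_state:
  assumes "simple_graph n E"
  shows "graph_fidelity n E (thermal_state n E \<beta>) = complex_of_real (1 / (1 + exp (-2*\<beta>)) ^ n)"
  by (simp add: graph_fidelity_def graph_state_eq_graph_basis thermal_state_graph_basis[OF assms]
      graph_basis_normalized thermal_weight_def power_one_over)

lemma stab_S_projector_graph_basis:
  assumes G: "simple_graph n E"
  shows "((1/2) \<cdot>\<^sub>m (1\<^sub>m (2^n) + stab_S n E l)) *\<^sub>v graph_basis n E a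
    = complex_of_real ((1 + (\<Prod>i<n. minus_one_pow (l i \<and> bit a i))) / 2) \<cdot>\<^sub>v graph_basis n E a"
proof -
  have S: "1\<^sub>m (2^n) + stab_S n E l \<in> carrier_mat (2^n) (2^n)"
    using stab_S_carrier by simp
  have "((1/2) \<cdot>\<^sub>m (1\<^sub>m (2^n) + stab_S n E l)) *\<^sub>v graph_basis n E a
      = (1/2) \<cdot>\<^sub>v (graph_basis n E a + (\<Prod>i<n. minus_one_pow (l i \<and> bit a i)) \<cdot>\<^sub>v graph_basis n E a)"
    using stab_S_carrier[of n E l]
    by (simp add: smult_mat_mult_vec[OF S graph_basis_carrier] add_mult_distrib_mat_vec[of _ "2^n" "2^n"]
        stab_S_graph_basis[OF G])
  then show ?thesis by (auto simp: algebra_simps of_real_prod)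
qed

lemma prob_plus_stab_S_thermal_state:
  assumes G: "simple_graph n E"
  shows "2 * prob_plus n (stab_S n E l) (thermal_state n E \<beta>) - 1
    = (\<Prod>i<n. (1 + minus_one_pow (l i) * exp (-2*\<beta>)) / (1 + exp (-2*\<beta>)))"
proof -
  define P where "P = (1/2) \<cdot>\<^sub>m (1\<^sub>m (2^n) + stab_S n E l)"
  define \<sigma> where "\<sigma> a = (\<Prod>i<n. minus_one_pow (l i \<and> bit a i) :: real)" for a :: nat
  have P: "P \<in> carrier_mat (2^n) (2^n)" unfolding P_def using stab_S_carrier by simp
  have "(P * thermal_state n E \<beta>) *\<^sub>v graph_basis n E a
      = complex_of_real ((1 + \<sigma> a) / 2 * thermal_weight \<beta> n a) \<cdot>\<^sub>v graph_basis n E a" for a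
    unfolding P_def \<sigma>_def
    by (subst mult_mat_vec_common_eigenvector[OF P[unfolded P_def] thermal_state_carrier graph_basis_carrier
          stab_S_projector_graph_basis[OF G] thermal_state_graph_basis[OF G]]) simp
  then have "trace_mat (P * thermal_state n E \<beta>)
      = complex_of_real (\<Sum>a<(2::nat)^n. (1 + \<sigma> a) / 2 * thermal_weight \<beta> n a)"
    by (subst trace_mat_graph_eigenbasis[OF mult_carrier_mat[OF P thermal_state_carrier]])
      (simp_all add: of_real_sum)
  also have "(\<Sum>a<(2::nat)^n. (1 + \<sigma> a) / 2 * thermal_weight \<beta> n a)
      = (1 + (\<Sum>a<(2::nat)^n. \<sigma> a * thermal_weight \<beta> n a)) / 2"
    by (simp add: sum.distrib sum_divide_distrib[symmetric] algebra_simps sum_thermal_weight)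
  also have "(\<Sum>a<(2::nat)^n. \<sigma> a * thermal_weight \<beta> n a)
      = (\<Prod>i<n. (1 + minus_one_pow (l i) * exp (-2*\<beta>)) / (1 + exp (-2*\<beta>)))"
    unfolding \<sigma>_def thermal_weight_def prod.distrib[symmetric]
    by (subst sum_pow2_prod_bit) (simp add: add_divide_distrib)
  finally have "prob_plus n (stab_S n E l) (thermal_state n E \<beta>)
      = (1 + (\<Prod>i<n. (1 + minus_one_pow (l i) * exp (-2*\<beta>)) / (1 + exp (-2*\<beta>)))) / 2"
    unfolding prob_plus_def P_def[symmetric] by (simp only: Re_complex_of_real)
  then show ?thesis by simp
qed

section \<open>A strong law of large numbers for bounded variables\<close>

lemma (in prob_space) expectation_plus_minus_one:
  assumes Y: "random_variable borel Y" and pm: "AE \<omega> in M. Y \<omega> \<in> {1, -1}"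
  shows "expectation Y = 2 * prob {\<omega> \<in> space M. Y \<omega> = 1} - 1"
proof -
  define S where "S = {\<omega> \<in> space M. Y \<omega> = 1}"
  have S: "S \<in> events" unfolding S_def using Y by measurable
  have "AE \<omega> in M. Y \<omega> = 2 * indicator S \<omega> - 1"
    using pm AE_space by eventually_elim (auto simp: S_def indicator_def)
  then have "expectation Y = expectation (\<lambda>\<omega>. 2 * indicator S \<omega> - 1)"
    by (intro integral_cong_AE) (use Y S in auto)
  also have "\<dots> = 2 * prob S - 1"
    using S by (subst Bochner_Integration.integral_diff) (auto simp: prob_space emeasure_eq_measure)
  finally show ?thesis unfolding S_def .
qed

lemma (in prob_space) Hoeffding_sum_deviation:
  assumes indep: "indep_vars (\<lambda>_. borel) X UNIV"
    and bounded: "\<And>i. AE \<omega> in M. X i \<omega> \<in> {a..b}" and "a < b"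
    and mean: "\<And>i. expectation (X i) = c"
    and "\<epsilon> \<ge> 0"
  shows "prob {\<omega> \<in> space M. real N * \<epsilon> \<le> \<bar>(\<Sum>i<N. X i \<omega>) - real N * c\<bar>}
    \<le> 2 * exp (- 2 * \<epsilon>\<^sup>2 / (b - a)\<^sup>2) ^ N"
proof (cases "N = 0")
  case False
  interpret Hoeffding_ineq M "{..<N}" X "\<lambda>_. a" "\<lambda>_. b" "real N * c"
  proof unfold_locales
    show "indep_vars (\<lambda>_. borel) X {..<N}" using indep by (rule indep_vars_subset) auto
    show "AE x in M. X i x \<in> {a..b}" for i by (rule bounded)
  qed (simp_all add: mean)
  have "prob {\<omega> \<in> space M. real N * \<epsilon> \<le> \<bar>(\<Sum>i<N. X i \<omega>) - real N * c\<bar>}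
      \<le> 2 * exp (- 2 * (real N * \<epsilon>)\<^sup>2 / (\<Sum>i<N. (b - a)\<^sup>2))"
    using \<open>\<epsilon> \<ge> 0\<close> \<open>a < b\<close> False by (intro Hoeffding_ineq_abs_ge) auto
  also have "- 2 * (real N * \<epsilon>)\<^sup>2 / (\<Sum>i<N. (b - a)\<^sup>2) = real N * (- 2 * \<epsilon>\<^sup>2 / (b - a)\<^sup>2)"
    using False by (simp add: power2_eq_square)
  finally show ?thesis by (simp only: exp_of_nat_mult)
qed (simp add: prob_space)

lemma (in prob_space) AE_eventually_sum_deviation_less:
  assumes indep: "indep_vars (\<lambda>_. borel) X UNIV"
    and bounded: "\<And>i. AE \<omega> in M. X i \<omega> \<in> {a..b}" and "a < b"
    and mean: "\<And>i. expectation (X i) = c"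
    and "\<epsilon> > 0"
  shows "AE \<omega> in M. eventually (\<lambda>N. \<bar>(\<Sum>i<N. X i \<omega>) - real N * c\<bar> < real N * \<epsilon>) sequentially"
proof -
  define r where "r = exp (- 2 * \<epsilon>\<^sup>2 / (b - a)\<^sup>2)"
  have "r < 1" unfolding r_def using \<open>\<epsilon> > 0\<close> \<open>a < b\<close> by simp
  have [measurable]: "X i \<in> borel_measurable M" for i
    using indep unfolding indep_vars_def by auto
  have "AE \<omega> in M. eventually (\<lambda>N. \<omega> \<in> space M
      - {\<omega> \<in> space M. real N * \<epsilon> \<le> \<bar>(\<Sum>i<N. X i \<omega>) - real N * c\<bar>}) sequentially"
  proof (rule borel_cantelli_AE1)
    have "summable (\<lambda>N. 2 * r ^ N)"
      using \<open>r < 1\<close> by (intro summable_mult summable_geometric) (auto simp: r_def)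
    then show "summable (\<lambda>N. measure M {\<omega> \<in> space M. real N * \<epsilon> \<le> \<bar>(\<Sum>i<N. X i \<omega>) - real N * c\<bar>})"
      by (rule summable_comparison_test')
        (use Hoeffding_sum_deviation[OF indep bounded \<open>a < b\<close> mean] \<open>\<epsilon> > 0\<close> in \<open>auto simp: r_def\<close>)
  qed (auto simp: emeasure_eq_measure)
  then show ?thesis
    by eventually_elim (auto elim: eventually_mono)
qed

theorem (in prob_space) strong_law_of_large_numbers_bounded:
  assumes "indep_vars (\<lambda>_. borel) X UNIV"
    and "\<And>i. AE \<omega> in M. X i \<omega> \<in> {a..b}" and "a < b"
    and "\<And>i. expectation (X i) = c"
  shows "AE \<omega> in M. (\<lambda>N. (\<Sum>i<N. X i \<omega>) / real N) \<longlonglongrightarrow> c"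
proof -
  have "AE \<omega> in M. \<forall>m. eventually (\<lambda>N. \<bar>(\<Sum>i<N. X i \<omega>) - real N * c\<bar> < real N / real (Suc m)) sequentially"
    unfolding AE_all_countable
    using AE_eventually_sum_deviation_less[OF assms, of "1 / real (Suc _)"] by simp
  then show ?thesis
  proof eventually_elim
    case (elim \<omega>)
    show ?case
    proof (rule tendstoI)
      fix e :: real assume "e > 0"
      then obtain m where m: "1 / real (Suc m) < e"
        using reals_Archimedean by (auto simp: inverse_eq_divide)
      from elim[rule_format, of m] eventually_gt_at_top[of 0]
      show "eventually (\<lambda>N. dist ((\<Sum>i<N. X i \<omega>) / real N) c < e) sequentially"
      proof eventually_elim
        case (elim N)
        then have "dist ((\<Sum>i<N. X i \<omega>) / real N) c < 1 / real (Suc m)"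
          by (simp add: dist_real_def field_simps abs_div_pos[symmetric] flip: abs_mult_pos)
        with m show ?case by linarith
      qed
    qed
  qed
qed

lemma (in prob_space) AE_average_plus_minus_one_tendsto:
  assumes indep: "indep_vars (\<lambda>_. borel) X UNIV" and pm: "\<And>i. AE \<omega> in M. X i \<omega> \<in> {1, -1}"
    and plus: "\<And>i. prob {\<omega> \<in> space M. X i \<omega> = 1} = q"
  shows "AE \<omega> in M. (\<lambda>N. (\<Sum>i<N. X i \<omega>) / real N) \<longlonglongrightarrow> 2 * q - 1"
proof (rule strong_law_of_large_numbers_bounded[OF indep, of "-1" 1])
  show "AE \<omega> in M. X i \<omega> \<in> {-1..1}" for i
    using pm[of i] by eventually_elim auto
  show "expectation (X i) = 2 * q - 1" for i
    using indep pm plus by (simp add: expectation_plus_minus_one indep_vars_def)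
qed simp

lemma coeff_prod_linear_factors:
  fixes s :: "nat \<Rightarrow> 'a::comm_ring_1"
  shows "coeff (\<Prod>i<n. [:1, s i:]) 0 = 1 \<and> coeff (\<Prod>i<n. [:1, s i:]) 1 = (\<Sum>i<n. s i)"
proof (induction n)
  case (Suc n)
  have "(\<Prod>i<Suc n. [:1, s i:]) = [:1, s n:] * (\<Prod>i<n. [:1, s i:])" by (simp add: mult.commute)
  then show ?case using Suc by (simp add: mult_pCons_left One_nat_def)
qed simp

lemma sum_minus_one_pow_eq_hamming_wt:
  "(\<Sum>i<n. minus_one_pow (l i) :: real) = real n - 2 * real (hamming_wt n l)"
proof (induction n)
  case (Suc n)
  have "{i. i < Suc n \<and> l i} = (if l n then insert n {i. i < n \<and> l i} else {i. i < n \<and> l i})"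
    by (auto simp: less_Suc_eq)
  then have "hamming_wt (Suc n) l = hamming_wt n l + of_bool (l n)"
    by (simp add: hamming_wt_def)
  then show ?case using Suc by simp
qed (simp add: hamming_wt_def)

lemma prod_linear_factors_expansion:
  fixes s :: "nat \<Rightarrow> 'a::comm_ring_1"
  obtains p where "coeff p 0 = 0" "coeff p 1 = 0"
    "\<And>x. (\<Prod>i<n. 1 + s i * x) = 1 + (\<Sum>i<n. s i) * x + poly p x"
proof
  let ?p = "(\<Prod>i<n. [:1, s i:]) - [:1, \<Sum>i<n. s i:]"
  show "coeff ?p 0 = 0" "coeff ?p 1 = 0"
    using coeff_prod_linear_factors[of s n] by (simp_all add: coeff_pCons')
  show "(\<Prod>i<n. 1 + s i * x) = 1 + (\<Sum>i<n. s i) * x + poly ?p x" for x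
    by (simp add: poly_prod algebra_simps)
qed

lemma cmod_graph_fidelity_minus_stab_S_mean:
  assumes "simple_graph n E"
  shows "cmod (graph_fidelity n E (thermal_state n E \<beta>)
      - complex_of_real (2 * prob_plus n (stab_S n E l) (thermal_state n E \<beta>) - 1))
    = \<bar>(\<Prod>i<n. 1 + minus_one_pow (l i) * exp (-2*\<beta>)) - 1\<bar> / (1 + exp (-2*\<beta>)) ^ n"
proof -
  have "(1 + exp (-2*\<beta>)) ^ n > 0" by (simp add: add_pos_pos)
  then show ?thesis
    unfolding graph_fidelity_thermal_state[OF assms] prob_plus_stab_S_thermal_state[OF assms]
      of_real_diff[symmetric] norm_of_real
    by (simp add: prod_dividef abs_minus_commute flip: diff_divide_distrib)
qed

theorem theorem2:
  fixes n :: nat and E :: "(nat \<times> nat) set" and l :: "nat \<Rightarrow> bool"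
  assumes "simple_graph n E"
  shows "\<exists>p :: real poly. coeff p 0 = 0 \<and> coeff p 1 = 0 \<and>
    (\<forall>(kB::real) (T::real) (M::'a measure) (out :: nat \<Rightarrow> 'a \<Rightarrow> real).
       kB > 0 \<longrightarrow> T > 0 \<longrightarrow> prob_space M \<longrightarrow>
       prob_space.indep_vars M (\<lambda>_. borel) out UNIV \<longrightarrow>
       (\<forall>i. AE \<omega> in M. out i \<omega> \<in> {1, -1}) \<longrightarrow>
       (\<forall>i. measure M {\<omega> \<in> space M. out i \<omega> = 1}
              = prob_plus n (stab_S n E l) (thermal_state n E (1 / (kB * T)))) \<longrightarrow>
       (AE \<omega> in M.
          (\<lambda>N. cmod (graph_fidelity n E (thermal_state n E (1 / (kB * T)))
                       - complex_of_real ((\<Sum>i<N. out i \<omega>) / real N)))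
          \<longlonglongrightarrow>
          \<bar>real_of_int (int n - 2 * int (hamming_wt n l)) * exp (- 2 * (1 / (kB * T)))
             + poly p (exp (- 2 * (1 / (kB * T))))\<bar>
          / (1 + exp (- 2 * (1 / (kB * T)))) ^ n))"
proof -
  obtain p :: "real poly" where p0: "coeff p 0 = 0" and p1: "coeff p 1 = 0"
    and expand: "\<And>x. (\<Prod>i<n. 1 + minus_one_pow (l i) * x) = 1 + (\<Sum>i<n. minus_one_pow (l i)) * x + poly p x"
    using prod_linear_factors_expansion[where s = "\<lambda>i. minus_one_pow (l i) :: real" and n = n] by blast
  have deviation: "\<bar>real_of_int (int n - 2 * int (hamming_wt n l)) * exp (-2*\<beta>) + poly p (exp (-2*\<beta>))\<bar>
      / (1 + exp (-2*\<beta>)) ^ n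
    = cmod (graph_fidelity n E (thermal_state n E \<beta>)
      - complex_of_real (2 * prob_plus n (stab_S n E l) (thermal_state n E \<beta>) - 1))" for \<beta>
    unfolding cmod_graph_fidelity_minus_stab_S_mean[OF assms] expand sum_minus_one_pow_eq_hamming_wt by simp
  show ?thesis
  proof (intro exI[of _ p] conjI p0 p1 allI impI, goal_cases)
    case (1 kB T M out)
    interpret prob_space M by fact
    have "AE \<omega> in M. (\<lambda>N. (\<Sum>i<N. out i \<omega>) / real N)
        \<longlonglongrightarrow> 2 * prob_plus n (stab_S n E l) (thermal_state n E (1 / (kB * T))) - 1"
      using 1 by (intro AE_average_plus_minus_one_tendsto) auto
    then show ?case
      by eventually_elim (unfold deviation, intro tendsto_intros)
  qed
qed

end
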